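(* Let $n=2k+1$ with $k\ge 2$. Then $W=\{a_1,a_{k+1}\}$ is a local resolving set of $S_n$.
   Context: For $n\ge 3$, $S_n$ is the graph with vertex set $\{a_i,b_i,c_i,d_i : 1\le i\le n\}$ and edge set $\{a_ia_{i+1}, b_ib_{i+1}, c_ic_{i+1}, d_id_{i+1}, a_{i+1}b_i, a_ib_i, b_ic_i, c_id_i : 1\le i\le n\}$, indices taken modulo $n$. A vertex $w$ resolves $u,v$ if $d(u,w)\neq d(v,w)$ ($d$ the graph distance). A set $W$ is a local resolving set if every two adjacent vertices are resolved by some element of $W$. *)

theory Defs
  imports Main
begin

fun walk :: "('a \<Rightarrow> 'a \<Rightarrow> bool) \<Rightarrow> 'a list \<Rightarrow> bool" where
  "walk E [] = False"
| "walk E [x] = True"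
| "walk E (x # y # ys) = (E x y \<and> walk E (y # ys))"

definition gdist :: "('a \<Rightarrow> 'a \<Rightarrow> bool) \<Rightarrow> 'a \<Rightarrow> 'a \<Rightarrow> nat" where
  "gdist E u v = (LEAST m. \<exists>xs. walk E xs \<and> hd xs = u \<and> last xs = v \<and> length xs = Suc m)"

definition resolves :: "('a \<Rightarrow> 'a \<Rightarrow> bool) \<Rightarrow> 'a \<Rightarrow> 'a \<Rightarrow> 'a \<Rightarrow> bool" where
  "resolves E w u v \<longleftrightarrow> gdist E u w \<noteq> gdist E v w"

definition local_resolving_set ::
  "'a set \<Rightarrow> ('a \<Rightarrow> 'a \<Rightarrow> bool) \<Rightarrow> 'a set \<Rightarrow> bool" where
  "local_resolving_set V E W \<longleftrightarrow> W \<subseteq> V \<and>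
     (\<forall>u\<in>V. \<forall>v\<in>V. E u v \<longrightarrow> (\<exists>w\<in>W. resolves E w u v))"

text \<open>The graph S_n. Vertex a_i is (A, i-1) etc., indices 0..n-1 (i.e. i mod n).\<close>
datatype layer = LA | LB | LC | LD

definition S_verts :: "nat \<Rightarrow> (layer \<times> nat) set" where
  "S_verts n = UNIV \<times> {..<n}"

definition S_edge0 :: "nat \<Rightarrow> layer \<times> nat \<Rightarrow> layer \<times> nat \<Rightarrow> bool" where
  "S_edge0 n u v \<longleftrightarrow> (\<exists>i<n.
      (u = (LA, i) \<and> v = (LA, Suc i mod n))
    \<or> (u = (LB, i) \<and> v = (LB, Suc i mod n))
    \<or> (u = (LC, i) \<and> v = (LC, Suc i mod n))
    \<or> (u = (LD, i) \<and> v = (LD, Suc i mod n))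
    \<or> (u = (LA, Suc i mod n) \<and> v = (LB, i))
    \<or> (u = (LA, i) \<and> v = (LB, i))
    \<or> (u = (LB, i) \<and> v = (LC, i))
    \<or> (u = (LC, i) \<and> v = (LD, i)))"

definition S_edge :: "nat \<Rightarrow> layer \<times> nat \<Rightarrow> layer \<times> nat \<Rightarrow> bool" where
  "S_edge n u v \<longleftrightarrow> S_edge0 n u v \<or> S_edge0 n v u"

end

theory Submission
  imports Defs
begin

text \<open>
  The distance from a vertex a_s of S_n has a closed form: on the a-cycle it is the cyclic
  distance to s, a vertex b_i is one step beyond the nearer of a_i and a_(i+1), and c_i, d_i
  lie one and two steps further out. This is verified by exhibiting the formula as a
  potential that changes by at most one along every edge and strictly decreases along some
  edge at every vertex other than a_s. For n = 2k + 1 the distance from a_1 increases along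
  the a-cycle up to index k and decreases after it, while the distance from a_(k+1) does the
  opposite, so every edge changes at least one of the two distances; k \<ge> 1 already suffices.
\<close>

lemma walk_potential_le:
  assumes "\<And>x y. E x y \<Longrightarrow> f x \<le> f y + 1" "walk E xs"
  shows "f (hd xs) \<le> f (last xs) + (length xs - 1)"
  using assms(2) by (induction xs rule: induct_list012) (auto dest: assms(1))

lemma walk_descending_exists:
  assumes "\<And>v. v \<in> V \<Longrightarrow> v \<noteq> s \<Longrightarrow> \<exists>u\<in>V. E v u \<and> f u + 1 = f v"
    and "f s = 0" "v \<in> V"
  shows "\<exists>xs. walk E xs \<and> hd xs = v \<and> last xs = s \<and> length xs = Suc (f v)"
  using assms(3)
proof (induction "f v" arbitrary: v)
  case 0
  then have "v = s" using assms(1) by fastforce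
  then show ?case using 0 by (intro exI[of _ "[v]"]) simp
next
  case (Suc m)
  then obtain u where u: "u \<in> V" "E v u" "f u + 1 = f v" using assms(1,2) by fastforce
  moreover have "m = f u" using u(3) Suc.hyps(2) by simp
  ultimately obtain xs where xs: "walk E xs" "hd xs = u" "last xs = s" "length xs = Suc (f u)"
    using Suc.hyps(1) by blast
  then obtain ys where "xs = u # ys" by (cases xs) auto
  then show ?case using xs u by (intro exI[of _ "v # xs"]) auto
qed

lemma gdist_eq_potential:
  assumes "\<And>x y. E x y \<Longrightarrow> f x \<le> f y + 1"
    and "\<And>v. v \<in> V \<Longrightarrow> v \<noteq> s \<Longrightarrow> \<exists>u\<in>V. E v u \<and> f u + 1 = f v"
    and "f s = 0" "v \<in> V"
  shows "gdist E v s = f v"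
  unfolding gdist_def
proof (rule Least_equality)
  show "\<exists>xs. walk E xs \<and> hd xs = v \<and> last xs = s \<and> length xs = Suc (f v)"
    using walk_descending_exists[OF assms(2-4)] .
next
  fix m assume "\<exists>xs. walk E xs \<and> hd xs = v \<and> last xs = s \<and> length xs = Suc m"
  then show "f v \<le> m" using walk_potential_le[OF assms(1)] assms(3) by fastforce
qed

lemma Suc_mod_cases:
  assumes "i < n"
  obtains "i + 1 = n" "Suc i mod n = 0" | "i + 1 < n" "Suc i mod n = Suc i"
  using assms by (cases "i + 1 = n") auto

definition ring_dist :: "nat \<Rightarrow> nat \<Rightarrow> nat \<Rightarrow> nat" where
  "ring_dist n s i = (if i \<le> s then min (s - i) (n + i - s) else min (i - s) (n + s - i))"

lemma ring_dist_self [simp]: "ring_dist n s s = 0"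
  by (simp add: ring_dist_def)

lemma ring_dist_Suc_mod:
  assumes "s < n" "i < n"
  shows "ring_dist n s i \<le> ring_dist n s (Suc i mod n) + 1"
    and "ring_dist n s (Suc i mod n) \<le> ring_dist n s i + 1"
  using assms(2)
  by (cases rule: Suc_mod_cases; use assms(1) in \<open>auto simp: ring_dist_def\<close>)+

lemma ring_dist_descent:
  assumes "s < n" "i < n" "i \<noteq> s"
  shows "\<exists>j<n. (j = Suc i mod n \<or> i = Suc j mod n) \<and> ring_dist n s j + 1 = ring_dist n s i"
proof -
  have backward: ?thesis if "0 < i" "ring_dist n s (i - 1) + 1 = ring_dist n s i"
    using that assms by (intro exI[of _ "i - 1"]) auto
  have forward: ?thesis if "ring_dist n s (Suc i mod n) + 1 = ring_dist n s i"
    using that assms by (intro exI[of _ "Suc i mod n"]) auto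
  consider (below_near) "i < s" "2 * (s - i) \<le> n"
    | (below_far_0) "i < s" "2 * (s - i) > n" "i = 0"
    | (below_far) "i < s" "2 * (s - i) > n" "i > 0"
    | (above_near) "s < i" "2 * (i - s) \<le> n"
    | (above_far) "s < i" "2 * (i - s) > n" "Suc i < n"
    | (above_far_last) "s < i" "2 * (i - s) > n" "Suc i = n"
    using assms by linarith
  then show ?thesis
  proof cases
    case below_near
    then show ?thesis using assms by (intro forward) (auto simp: ring_dist_def)
  next
    case below_far_0
    then have "i = Suc (n - 1) mod n" using assms by simp
    then show ?thesis
      using below_far_0 assms by (intro exI[of _ "n - 1"]) (auto simp: ring_dist_def)
  next
    case below_far
    then show ?thesis using assms by (intro backward) (auto simp: ring_dist_def)
  next
    case above_near
    then show ?thesis using assms by (intro backward) (auto simp: ring_dist_def)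
  next
    case above_far
    then show ?thesis using assms by (intro forward) (auto simp: ring_dist_def)
  next
    case above_far_last
    then show ?thesis using assms by (intro forward) (auto simp: ring_dist_def)
  qed
qed

lemma S_edge0E:
  assumes "S_edge0 n u v"
  obtains (ring) L i where "i < n" "u = (L, i)" "v = (L, Suc i mod n)"
    | (AB) i where "i < n" "u = (LA, i)" "v = (LB, i)"
    | (AB_next) i where "i < n" "u = (LA, Suc i mod n)" "v = (LB, i)"
    | (BC) i where "i < n" "u = (LB, i)" "v = (LC, i)"
    | (CD) i where "i < n" "u = (LC, i)" "v = (LD, i)"
  using assms unfolding S_edge0_def by (elim exE conjE disjE) (simp_all add: that)

lemma S_edge_sym: "S_edge n u v \<longleftrightarrow> S_edge n v u"
  unfolding S_edge_def by blast

lemma S_edge_ring: "i < n \<Longrightarrow> S_edge n (L, i) (L, Suc i mod n)"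
  unfolding S_edge_def S_edge0_def by (cases L) auto

lemma S_edge_spokes:
  assumes "i < n"
  shows "S_edge n (LB, i) (LA, i)" "S_edge n (LB, i) (LA, Suc i mod n)"
    "S_edge n (LC, i) (LB, i)" "S_edge n (LD, i) (LC, i)"
  using assms unfolding S_edge_def S_edge0_def by auto

text \<open>S_dist n s v is the distance from v to a_(s+1) = (LA, s) in S_n.\<close>

fun S_dist :: "nat \<Rightarrow> nat \<Rightarrow> layer \<times> nat \<Rightarrow> nat" where
  "S_dist n s (LA, i) = ring_dist n s i"
| "S_dist n s (LB, i) = min (ring_dist n s i) (ring_dist n s (Suc i mod n)) + 1"
| "S_dist n s (LC, i) = min (ring_dist n s i) (ring_dist n s (Suc i mod n)) + 2"
| "S_dist n s (LD, i) = min (ring_dist n s i) (ring_dist n s (Suc i mod n)) + 3"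

lemma S_dist_LC_LD:
  "S_dist n s (LC, i) = S_dist n s (LB, i) + 1" "S_dist n s (LD, i) = S_dist n s (LB, i) + 2"
  by simp_all

lemma S_dist_edge0_le:
  assumes "s < n" "S_edge0 n u v"
  shows "S_dist n s u \<le> S_dist n s v + 1 \<and> S_dist n s v \<le> S_dist n s u + 1"
  using assms(2)
proof (cases rule: S_edge0E)
  case (ring L i)
  then have "Suc i mod n < n" by simp
  with ring show ?thesis
    using ring_dist_Suc_mod[OF assms(1), of i] ring_dist_Suc_mod[OF assms(1), of "Suc i mod n"]
    by (cases L) auto
next
  case (AB i)
  then show ?thesis using ring_dist_Suc_mod[OF assms(1) AB(1)] by (simp add: min_def)
next
  case (AB_next i)
  then show ?thesis using ring_dist_Suc_mod[OF assms(1) AB_next(1)] by (simp add: min_def)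
qed auto

lemma S_dist_descent:
  assumes "s < n" "v \<in> S_verts n" "v \<noteq> (LA, s)"
  shows "\<exists>u\<in>S_verts n. S_edge n v u \<and> S_dist n s u + 1 = S_dist n s v"
proof -
  obtain L i where v: "v = (L, i)" and i: "i < n"
    using assms(2) by (cases v) (auto simp: S_verts_def)
  have i': "Suc i mod n < n" using i by simp
  show ?thesis
  proof (cases L)
    case LA
    then obtain j where "j < n" "j = Suc i mod n \<or> i = Suc j mod n"
      and "ring_dist n s j + 1 = ring_dist n s i"
      using ring_dist_descent[OF assms(1) i] assms(3) v by auto
    then show ?thesis using LA v S_edge_ring[of i n LA] S_edge_ring[of j n LA] i
      by (intro bexI[of _ "(LA, j)"]) (auto simp: S_verts_def S_edge_sym)
  next
    case LB
    show ?thesis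
    proof (cases "ring_dist n s i \<le> ring_dist n s (Suc i mod n)")
      case True
      then show ?thesis using LB v i S_edge_spokes[OF i]
        by (intro bexI[of _ "(LA, i)"]) (auto simp: S_verts_def)
    next
      case False
      then show ?thesis using LB v i' S_edge_spokes[OF i]
        by (intro bexI[of _ "(LA, Suc i mod n)"]) (auto simp: S_verts_def)
    qed
  next
    case LC
    then show ?thesis
      using v i S_edge_spokes[OF i] by (intro bexI[of _ "(LB, i)"]) (auto simp: S_verts_def)
  next
    case LD
    then show ?thesis
      using v i S_edge_spokes[OF i] by (intro bexI[of _ "(LC, i)"]) (auto simp: S_verts_def)
  qed
qed

lemma gdist_S_edge_LA:
  assumes "s < n" "v \<in> S_verts n"
  shows "gdist (S_edge n) v (LA, s) = S_dist n s v"
proof (rule gdist_eq_potential[OF _ _ _ assms(2)])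
  show "S_dist n s x \<le> S_dist n s y + 1" if "S_edge n x y" for x y
    using that S_dist_edge0_le[OF assms(1)] unfolding S_edge_def by blast
qed (use S_dist_descent[OF assms(1)] in auto)

lemma ring_dist_0: "ring_dist n 0 i = min i (n - i)"
  by (simp add: ring_dist_def)

lemma ring_dist_mid:
  "n = 2*k+1 \<Longrightarrow> i < n \<Longrightarrow> ring_dist n k i = (if i \<le> k then k - i else i - k)"
  by (auto simp: ring_dist_def)

lemma ring_dist_odd_step_eq:
  assumes "n = 2*k+1" "i < n"
  shows "ring_dist n 0 (Suc i mod n) = ring_dist n 0 i \<longleftrightarrow> i = k"
    and "ring_dist n k (Suc i mod n) = ring_dist n k i \<longleftrightarrow> i = 2*k"
  using assms(2)
  by (cases rule: Suc_mod_cases; auto simp: assms(1) ring_dist_0 ring_dist_mid)+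

lemma S_dist_LB_step_eq:
  assumes "1 \<le> k" "n = 2*k+1" "i < n"
  shows "S_dist n 0 (LB, Suc i mod n) = S_dist n 0 (LB, i) \<Longrightarrow> i = 2*k"
    and "S_dist n k (LB, Suc i mod n) = S_dist n k (LB, i) \<Longrightarrow> Suc i = k"
proof -
  consider (last) "i = 2*k" | (second_last) "Suc i = 2*k" | (inner) "Suc (Suc i) < n"
    using assms by linarith
  then have "(S_dist n 0 (LB, Suc i mod n) = S_dist n 0 (LB, i) \<longrightarrow> i = 2*k) \<and>
      (S_dist n k (LB, Suc i mod n) = S_dist n k (LB, i) \<longrightarrow> Suc i = k)"
  proof cases
    case last
    then show ?thesis using assms by (auto simp: ring_dist_0 ring_dist_mid)
  next
    case second_last
    \<comment> \<open>presburger closes the parity case i = 0, i.e. 1 = 2k\<close>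
    then show ?thesis using assms by (auto simp: ring_dist_0 ring_dist_mid) presburger
  next
    case inner
    then show ?thesis using assms by (auto simp: ring_dist_0 ring_dist_mid)
  qed
  then show "S_dist n 0 (LB, Suc i mod n) = S_dist n 0 (LB, i) \<Longrightarrow> i = 2*k"
    and "S_dist n k (LB, Suc i mod n) = S_dist n k (LB, i) \<Longrightarrow> Suc i = k" by blast+
qed

lemma S_dist_resolves_edge0:
  assumes "1 \<le> k" "n = 2*k+1" "S_edge0 n u v"
  shows "S_dist n 0 u \<noteq> S_dist n 0 v \<or> S_dist n k u \<noteq> S_dist n k v"
  using assms(3)
proof (cases rule: S_edge0E)
  case (ring L i)
  have B: "S_dist n 0 (LB, Suc i mod n) \<noteq> S_dist n 0 (LB, i) \<or>
      S_dist n k (LB, Suc i mod n) \<noteq> S_dist n k (LB, i)"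
    using S_dist_LB_step_eq[OF assms(1,2) ring(1)] assms(1) by linarith
  show ?thesis
  proof (cases L)
    case LA
    then show ?thesis using ring assms(1) ring_dist_odd_step_eq[OF assms(2) ring(1)] by auto
  next
    case LB
    then show ?thesis using B unfolding ring by metis
  next
    case LC
    then show ?thesis using B unfolding ring LC S_dist_LC_LD add_right_cancel by metis
  next
    case LD
    then show ?thesis using B unfolding ring LD S_dist_LC_LD add_right_cancel by metis
  qed
next
  case (AB i)
  then show ?thesis using assms(1,2) by (auto simp: mod_Suc ring_dist_0 ring_dist_mid)
next
  case (AB_next i)
  then show ?thesis using assms(1,2) by (auto simp: mod_Suc ring_dist_0 ring_dist_mid)
qed auto

lemma local_resolving_set_S_odd:
  assumes "1 \<le> k" "n = 2*k+1"
  shows "local_resolving_set (S_verts n) (S_edge n) {(LA, 0), (LA, k)}"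
  unfolding local_resolving_set_def
proof (intro conjI ballI impI)
  show "{(LA, 0), (LA, k)} \<subseteq> S_verts n" using assms(2) by (auto simp: S_verts_def)
next
  fix u v assume u: "u \<in> S_verts n" and v: "v \<in> S_verts n" and "S_edge n u v"
  then have "S_dist n 0 u \<noteq> S_dist n 0 v \<or> S_dist n k u \<noteq> S_dist n k v"
    using S_dist_resolves_edge0[OF assms] unfolding S_edge_def by metis
  moreover have "0 < n" "k < n" using assms(2) by auto
  ultimately show "\<exists>w\<in>{(LA, 0), (LA, k)}. resolves (S_edge n) w u v"
    unfolding resolves_def using gdist_S_edge_LA u v by auto
qed

theorem lemma3p5:
  fixes k n :: nat
  assumes "k \<ge> 2" and "n = 2 * k + 1"
  shows "local_resolving_set (S_verts n) (S_edge n) {(LA, 0), (LA, k)}"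
  using local_resolving_set_S_odd assms by simp

end
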